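(* Let $(K,\le)$ be a linearly ordered set which is compact in its order topology. The following are equivalent: (1) $K$ is almost totally disconnected; (2) there is a family $\{(a_i,b_i)\}_{i\in I}\subseteq K\times K$ such that (a) $a_i<b_i$ for every $i\in I$; (b) for every $x\in K$ the set $\{i\in I: a_i<x<b_i\}$ is countable; (c) for all $x<y$ in $K$ there is $i\in I$ with $x\le a_i<b_i\le y$.
   Context: For a set $\Gamma$, $\Sigma_0^1[0,1]^\Gamma$ is the subspace of $[0,1]^\Gamma$ (product topology) consisting of those $x$ with $x_\gamma\in\{0,1\}$ for all but countably many $\gamma$. A compact space is almost totally disconnected if it is homeomorphic to a subspace of $\Sigma_0^1[0,1]^\Gamma$ for some set $\Gamma$. *)

theory Defs
  imports "HOL-Analysis.Analysis"
begin

text \<open>The cube [0,1]^Gamma with the product topology (points are extensional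
  functions on Gamma).\<close>
definition cube01 :: "'g set \<Rightarrow> ('g \<Rightarrow> real) topology" where
  "cube01 \<Gamma> = product_topology (\<lambda>_. top_of_set {0..1}) \<Gamma>"

definition Sigma01 :: "'g set \<Rightarrow> ('g \<Rightarrow> real) set" where
  "Sigma01 \<Gamma> = {x \<in> topspace (cube01 \<Gamma>). countable {\<gamma> \<in> \<Gamma>. x \<gamma> \<notin> {0, 1}}}"

text \<open>X is almost totally disconnected, witnessed by the index set Gamma:
  X is compact and homeomorphic to a subspace of Sigma01 Gamma.\<close>
definition atd_wrt :: "'a topology \<Rightarrow> 'g set \<Rightarrow> bool" where
  "atd_wrt X \<Gamma> \<longleftrightarrow> compact_space X \<and>
     (\<exists>S \<subseteq> Sigma01 \<Gamma>. X homeomorphic_space subtopology (cube01 \<Gamma>) S)"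

end

(* For compact K, an embedding of K into Sigma01 Gamma is the same as a point-separating family
   of continuous maps g_gamma : K -> [0,1], only countably many of which take a value outside
   {0,1} at any given point.
   From such a family, take all pairs (s,t) such that (s,t) is a maximal interval on which some
   g_gamma stays inside a rational interval (p,q) with 0 < p < q < 1.  Around a point x, each
   of the countably many relevant choices of (gamma,p,q) yields at most one such interval, and
   compactness produces one between any two points separated by g_gamma.
   Conversely, Urysohn's lemma gives for every pair (a_i,b_i) a continuous map that is 0 up to
   a_i and 1 from b_i on, hence leaves {0,1} only strictly between a_i and b_i. *)

theory Submission
  imports Defs
begin

definition sigma01_separating :: "'a topology \<Rightarrow> 'g set \<Rightarrow> ('g \<Rightarrow> 'a \<Rightarrow> real) \<Rightarrow> bool" where
  "sigma01_separating X \<Gamma> g \<longleftrightarrow>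
     (\<forall>\<gamma>\<in>\<Gamma>. continuous_map X (top_of_set {0..1}) (g \<gamma>)) \<and>
     (\<forall>x\<in>topspace X. countable {\<gamma> \<in> \<Gamma>. g \<gamma> x \<notin> {0, 1}}) \<and>
     (\<forall>x\<in>topspace X. \<forall>y\<in>topspace X. x \<noteq> y \<longrightarrow> (\<exists>\<gamma>\<in>\<Gamma>. g \<gamma> x \<noteq> g \<gamma> y))"

lemma atd_wrt_imp_sigma01_separating:
  assumes "atd_wrt X \<Gamma>"
  shows "\<exists>g. sigma01_separating X \<Gamma> g"
proof -
  obtain S h where S: "S \<subseteq> Sigma01 \<Gamma>" and h: "homeomorphic_map X (subtopology (cube01 \<Gamma>) S) h"
    using assms unfolding atd_wrt_def homeomorphic_space by blast
  have cont: "continuous_map X (cube01 \<Gamma>) h"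
    using homeomorphic_imp_continuous_map[OF h] continuous_map_in_subtopology by blast
  have hS: "h x \<in> Sigma01 \<Gamma>" if "x \<in> topspace X" for x
    using homeomorphic_imp_surjective_map[OF h] S that by auto
  have "sigma01_separating X \<Gamma> (\<lambda>\<gamma> x. h x \<gamma>)"
    unfolding sigma01_separating_def
  proof (intro conjI ballI impI)
    show "continuous_map X (top_of_set {0..1}) (\<lambda>x. h x \<gamma>)" if "\<gamma> \<in> \<Gamma>" for \<gamma>
      using cont that unfolding cube01_def continuous_map_componentwise by blast
    show "countable {\<gamma> \<in> \<Gamma>. h x \<gamma> \<notin> {0, 1}}" if "x \<in> topspace X" for x
      using hS[OF that] unfolding Sigma01_def by blast
    fix x y assume xy: "x \<in> topspace X" "y \<in> topspace X" "x \<noteq> y"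
    then have "h x \<noteq> h y"
      using homeomorphic_imp_injective_map[OF h] by (auto dest: inj_onD)
    moreover have "h x \<in> extensional \<Gamma>" "h y \<in> extensional \<Gamma>"
      using hS xy unfolding Sigma01_def cube01_def by (auto simp: PiE_iff)
    ultimately show "\<exists>\<gamma>\<in>\<Gamma>. h x \<gamma> \<noteq> h y \<gamma>"
      by (meson extensionalityI)
  qed
  then show ?thesis
    by blast
qed

lemma compact_sigma01_separating_imp_atd_wrt:
  assumes "compact_space X" and "sigma01_separating X \<Gamma> g"
  shows "atd_wrt X \<Gamma>"
proof -
  define h where "h x = (\<lambda>\<gamma>\<in>\<Gamma>. g \<gamma> x)" for x
  have cont: "continuous_map X (cube01 \<Gamma>) h"
    using assms(2) unfolding cube01_def continuous_map_componentwise sigma01_separating_def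
    by (auto simp: h_def)
  have Sigma: "h ` topspace X \<subseteq> Sigma01 \<Gamma>"
  proof (rule image_subsetI)
    fix x assume "x \<in> topspace X"
    have "{\<gamma> \<in> \<Gamma>. h x \<gamma> \<notin> {0, 1}} = {\<gamma> \<in> \<Gamma>. g \<gamma> x \<notin> {0, 1}}"
      by (auto simp: h_def)
    then show "h x \<in> Sigma01 \<Gamma>"
      using assms(2) \<open>x \<in> topspace X\<close> continuous_map_image_subset_topspace[OF cont]
      unfolding Sigma01_def sigma01_separating_def by auto
  qed
  have "inj_on h (topspace X)"
  proof (rule inj_onI)
    fix x y assume xy: "x \<in> topspace X" "y \<in> topspace X" "h x = h y"
    then have "g \<gamma> x = g \<gamma> y" if "\<gamma> \<in> \<Gamma>" for \<gamma>
      using that by (metis h_def restrict_apply')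
    then show "x = y"
      using assms(2) xy unfolding sigma01_separating_def by blast
  qed
  moreover have "Hausdorff_space (cube01 \<Gamma>)"
    unfolding cube01_def Hausdorff_space_product_topology by (simp add: Hausdorff_space_subtopology)
  ultimately have "embedding_map X (cube01 \<Gamma>) h"
    using assms(1) cont continuous_imp_embedding_map by blast
  then have "X homeomorphic_space subtopology (cube01 \<Gamma>) (h ` topspace X)"
    unfolding embedding_map_def by (rule homeomorphic_map_imp_homeomorphic_space)
  then show ?thesis
    using assms(1) Sigma unfolding atd_wrt_def by blast
qed

definition maximal_interval_in :: "'a::linorder set \<Rightarrow> 'a \<Rightarrow> 'a \<Rightarrow> bool" where
  "maximal_interval_in U a b \<longleftrightarrow> a < b \<and> {a<..<b} \<subseteq> U \<and> a \<notin> U \<and> b \<notin> U"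

lemma maximal_interval_in_unique:
  assumes "maximal_interval_in U a b" "maximal_interval_in U c d"
    and "a < x" "x < b" "c < x" "x < d"
  shows "a = c \<and> b = d"
proof -
  have "c \<notin> {a<..<b}" "a \<notin> {c<..<d}" "d \<notin> {a<..<b}" "b \<notin> {c<..<d}"
    using assms(1,2) unfolding maximal_interval_in_def by blast+
  then show ?thesis
    using assms(3-6) by (metis greaterThanLessThan_iff order.strict_trans linorder_neqE)
qed

lemma finite_maximal_intervals_containing:
  "finite {(a, b). maximal_interval_in U a b \<and> a < x \<and> x < b}" (is "finite ?S")
proof (cases "?S = {}")
  case False
  then obtain c d where "(c, d) \<in> ?S" by auto
  then have "?S \<subseteq> {(c, d)}"
    by (blast dest: maximal_interval_in_unique)
  then show ?thesis
    using finite_subset by blast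
next
  case True
  then show ?thesis
    by (metis finite.emptyI)
qed

lemma maximal_interval_between_disjoint_closed:
  fixes A B :: "'a::linorder_topology set"
  assumes cpt: "compact (UNIV :: 'a set)" and "closed A" "closed B" "A \<inter> B = {}"
    and "x \<in> A" "y \<in> B" "x < y"
  obtains s t where "x \<le> s" "t \<le> y" "maximal_interval_in (- (A \<union> B)) s t"
proof -
  have compact: "compact C" if "closed C" for C :: "'a set"
    using compact_Int_closed[OF cpt that] by simp
  have "compact ({x..y} \<inter> A)" "x \<in> {x..y} \<inter> A"
    using assms by (auto intro: compact closed_Int)
  then obtain s where s: "s \<in> {x..y} \<inter> A" and s_max: "\<forall>z \<in> {x..y} \<inter> A. z \<le> s"
    using compact_attains_sup by blast
  have "s \<noteq> y"
    using s assms by blast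
  with s have "s < y"
    by auto
  then have "compact ({s..y} \<inter> B)" "y \<in> {s..y} \<inter> B"
    using assms by (auto intro: compact closed_Int)
  then obtain t where t: "t \<in> {s..y} \<inter> B" and t_min: "\<forall>z \<in> {s..y} \<inter> B. t \<le> z"
    using compact_attains_inf by blast
  have "s \<noteq> t"
    using s t assms by blast
  with t have "s < t"
    by auto
  moreover have "z \<notin> A \<and> z \<notin> B" if "s < z" "z < t" for z
  proof -
    have "z \<in> {x..y}" "z \<in> {s..y}"
      using that s t by auto
    then show ?thesis
      using that s_max t_min by (meson IntI leD)
  qed
  ultimately have "maximal_interval_in (- (A \<union> B)) s t"
    using s t unfolding maximal_interval_in_def by auto
  then show thesis
    using that s t by auto
qed

definition separating_interval_family :: "('a::linorder \<times> 'a) set \<Rightarrow> bool" where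
  "separating_interval_family P \<longleftrightarrow>
     (\<forall>(a, b) \<in> P. a < b) \<and>
     (\<forall>x. countable {(a, b) \<in> P. a < x \<and> x < b}) \<and>
     (\<forall>x y. x < y \<longrightarrow> (\<exists>(a, b) \<in> P. x \<le> a \<and> a < b \<and> b \<le> y))"

lemma sigma01_separating_imp_separating_interval_family:
  fixes g :: "'g \<Rightarrow> 'a::linorder_topology \<Rightarrow> real"
  assumes cpt: "compact (UNIV :: 'a set)" and sep: "sigma01_separating euclidean \<Gamma> g"
  shows "\<exists>P :: ('a \<times> 'a) set. separating_interval_family P"
proof -
  have cont: "continuous_on UNIV (g \<gamma>)" and range: "g \<gamma> x \<in> {0..1}" if "\<gamma> \<in> \<Gamma>" for \<gamma> x
    using sep that continuous_map_in_subtopology[of euclidean euclidean "{0..1}" "g \<gamma>"]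
    unfolding sigma01_separating_def by auto
  define P where "P = {(s, t). \<exists>\<gamma>\<in>\<Gamma>. \<exists>p\<in>\<rat>. \<exists>q\<in>\<rat>. 0 < p \<and> q < 1 \<and>
                              maximal_interval_in (g \<gamma> -` {p<..<q}) s t}"
  have "countable {(a, b) \<in> P. a < x \<and> x < b}" for x
  proof -
    let ?C = "{\<gamma> \<in> \<Gamma>. g \<gamma> x \<notin> {0, 1}}"
    let ?I = "\<lambda>(\<gamma>, p, q). {(a, b). maximal_interval_in (g \<gamma> -` {p<..<q}) a b \<and> a < x \<and> x < b}"
    have "(a, b) \<in> (\<Union>w \<in> ?C \<times> \<rat> \<times> \<rat>. ?I w)" if "(a, b) \<in> P" "a < x" "x < b" for a b
    proof -
      obtain \<gamma> p q where "\<gamma> \<in> \<Gamma>" "p \<in> \<rat>" "q \<in> \<rat>" "0 < p" "q < 1"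
        and ab: "maximal_interval_in (g \<gamma> -` {p<..<q}) a b"
        using \<open>(a, b) \<in> P\<close> unfolding P_def by blast
      moreover have "p < g \<gamma> x \<and> g \<gamma> x < q"
        using ab that unfolding maximal_interval_in_def by auto
      ultimately have "(\<gamma>, p, q) \<in> ?C \<times> \<rat> \<times> \<rat>" "(a, b) \<in> ?I (\<gamma>, p, q)"
        using ab that by auto
      then show ?thesis
        by blast
    qed
    then have "{(a, b) \<in> P. a < x \<and> x < b} \<subseteq> (\<Union>w \<in> ?C \<times> \<rat> \<times> \<rat>. ?I w)"
      by blast
    moreover have "countable ?C"
      using sep unfolding sigma01_separating_def by simp
    moreover have "countable (?I w)" for w
      by (cases w) (auto intro: countable_finite finite_maximal_intervals_containing)
    ultimately show ?thesis
      by (meson countable_SIGMA countable_UN countable_rat countable_subset)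
  qed
  moreover have "\<exists>(s, t) \<in> P. x \<le> s \<and> s < t \<and> t \<le> y" if "x < y" for x y
  proof -
    obtain \<gamma> where \<gamma>: "\<gamma> \<in> \<Gamma>" "g \<gamma> x \<noteq> g \<gamma> y"
      using sep \<open>x < y\<close> unfolding sigma01_separating_def by (metis less_irrefl UNIV_I topspace_euclidean)
    let ?lo = "min (g \<gamma> x) (g \<gamma> y)" and ?hi = "max (g \<gamma> x) (g \<gamma> y)"
    have "?lo < ?hi"
      using \<gamma>(2) by linarith
    then obtain p q where pq: "p \<in> \<rat>" "q \<in> \<rat>" "?lo < p" "p < q" "q < ?hi"
      by (metis Rats_dense_in_real)
    define A where "A = g \<gamma> -` {..p}"
    define B where "B = g \<gamma> -` {q..}"
    have closed: "closed A" "closed B"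
      unfolding A_def B_def using cont[OF \<gamma>(1)]
      by (auto intro: continuous_closed_vimage continuous_on_imp_continuous_within)
    have "A \<inter> B = {}" "- (A \<union> B) = g \<gamma> -` {p<..<q}"
      using pq unfolding A_def B_def by auto
    moreover have "x \<in> A \<and> y \<in> B \<or> x \<in> B \<and> y \<in> A"
      using pq unfolding A_def B_def by auto
    ultimately obtain s t where "x \<le> s" "t \<le> y" "maximal_interval_in (g \<gamma> -` {p<..<q}) s t"
      using maximal_interval_between_disjoint_closed[OF cpt closed _ _ _ \<open>x < y\<close>]
            maximal_interval_between_disjoint_closed[OF cpt closed(2,1) _ _ _ \<open>x < y\<close>]
      by (metis Int_commute Un_commute)
    moreover have "0 < p" "q < 1"
      using pq range[OF \<gamma>(1), of x] range[OF \<gamma>(1), of y] by (auto simp: min_less_iff_disj less_max_iff_disj)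
    ultimately show ?thesis
      using \<gamma>(1) pq unfolding P_def maximal_interval_in_def by blast
  qed
  ultimately have "separating_interval_family P"
    unfolding separating_interval_family_def P_def maximal_interval_in_def by auto
  then show ?thesis
    by blast
qed

lemma Hausdorff_space_euclidean_t2: "Hausdorff_space (euclidean :: 'a::t2_space topology)"
  unfolding Hausdorff_space_def disjnt_def by (metis hausdorff open_openin)

lemma compact_linorder_step_function:
  fixes a b :: "'a::linorder_topology"
  assumes "compact (UNIV :: 'a set)" and "a < b"
  obtains f :: "'a \<Rightarrow> real" where "continuous_map euclidean (top_of_set {0..1}) f"
    and "\<And>x. x \<le> a \<Longrightarrow> f x = 0" and "\<And>x. b \<le> x \<Longrightarrow> f x = 1"
proof -
  have "normal_space (euclidean :: 'a topology)"
    using assms(1) Hausdorff_space_euclidean_t2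
    by (intro compact_Hausdorff_or_regular_imp_normal_space) (auto simp: compact_space_def)
  moreover have "disjnt {..a} {b..}"
    using assms(2) by (auto simp: disjnt_def)
  ultimately obtain f where "continuous_map euclidean (top_of_set {0..1::real}) f"
      "f ` {..a} \<subseteq> {0}" "f ` {b..} \<subseteq> {1}"
    using Urysohn_lemma[of euclidean "{..a}" "{b..}" 0 1] by auto
  then show thesis
    using that[of f] by (auto simp: image_subset_iff)
qed

lemma separating_interval_family_imp_sigma01_separating:
  fixes P :: "('a::linorder_topology \<times> 'a) set"
  assumes cpt: "compact (UNIV :: 'a set)" and fam: "separating_interval_family P"
  shows "\<exists>g. sigma01_separating (euclidean :: 'a topology) P g"
proof -
  have "\<exists>f :: 'a \<Rightarrow> real. continuous_map euclidean (top_of_set {0..1}) f \<and>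
            (\<forall>x \<le> fst i. f x = 0) \<and> (\<forall>x \<ge> snd i. f x = 1)" if "i \<in> P" for i
  proof -
    have "fst i < snd i"
      using fam that unfolding separating_interval_family_def by auto
    then obtain f :: "'a \<Rightarrow> real" where "continuous_map euclidean (top_of_set {0..1}) f"
      "\<And>x. x \<le> fst i \<Longrightarrow> f x = 0" "\<And>x. snd i \<le> x \<Longrightarrow> f x = 1"
      using compact_linorder_step_function[OF cpt] by blast
    then show ?thesis
      by blast
  qed
  then obtain g :: "'a \<times> 'a \<Rightarrow> 'a \<Rightarrow> real"
    where g: "\<And>i. i \<in> P \<Longrightarrow> continuous_map euclidean (top_of_set {0..1}) (g i)"
      and g0: "\<And>i x. i \<in> P \<Longrightarrow> x \<le> fst i \<Longrightarrow> g i x = 0"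
      and g1: "\<And>i x. i \<in> P \<Longrightarrow> snd i \<le> x \<Longrightarrow> g i x = 1"
    by metis
  have "a < x \<and> x < b" if "(a, b) \<in> P" "g (a, b) x \<notin> {0, 1}" for a b x
  proof -
    have "\<not> x \<le> a" "\<not> b \<le> x"
      using g0[OF that(1), of x] g1[OF that(1), of x] that(2) by auto
    then show ?thesis
      by (meson not_le)
  qed
  then have "{i \<in> P. g i x \<notin> {0, 1}} \<subseteq> {(a, b) \<in> P. a < x \<and> x < b}" for x
    by auto
  moreover have "countable {(a, b) \<in> P. a < x \<and> x < b}" for x
    using fam unfolding separating_interval_family_def by simp
  ultimately have countable: "countable {i \<in> P. g i x \<notin> {0, 1}}" for x
    by (rule countable_subset)
  have separating: "\<exists>i\<in>P. g i x \<noteq> g i y" if "x < y" for x y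
  proof -
    obtain a b where ab: "(a, b) \<in> P" "x \<le> a" "b \<le> y"
      using fam \<open>x < y\<close> unfolding separating_interval_family_def by blast
    then have "g (a, b) x = 0" "g (a, b) y = 1"
      using g0 g1 by auto
    then show ?thesis
      using ab(1) by force
  qed
  have "\<exists>i\<in>P. g i x \<noteq> g i y" if "x \<noteq> y" for x y
  proof (cases "x < y")
    case True
    then show ?thesis
      using separating by blast
  next
    case False
    with that have "y < x"
      by simp
    then show ?thesis
      using separating[of y x] by metis
  qed
  then have "sigma01_separating euclidean P g"
    unfolding sigma01_separating_def topspace_euclidean using g countable by simp
  then show ?thesis
    by blast
qed

theorem lemma4:
  fixes \<gamma>type :: "'g itself"
  assumes "compact (UNIV :: 'a::linorder_topology set)"
  shows "((\<exists>\<Gamma> :: 'g set. atd_wrt (euclidean :: 'a topology) \<Gamma>) \<longrightarrow>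
            (\<exists>P :: ('a \<times> 'a) set.
               (\<forall>(a, b) \<in> P. a < b) \<and>
               (\<forall>x. countable {(a, b) \<in> P. a < x \<and> x < b}) \<and>
               (\<forall>x y. x < y \<longrightarrow> (\<exists>(a, b) \<in> P. x \<le> a \<and> a < b \<and> b \<le> y))))
       \<and> ((\<exists>P :: ('a \<times> 'a) set.
               (\<forall>(a, b) \<in> P. a < b) \<and>
               (\<forall>x. countable {(a, b) \<in> P. a < x \<and> x < b}) \<and>
               (\<forall>x y. x < y \<longrightarrow> (\<exists>(a, b) \<in> P. x \<le> a \<and> a < b \<and> b \<le> y)))
            \<longrightarrow> (\<exists>\<Gamma> :: ('a \<times> 'a) set. atd_wrt (euclidean :: 'a topology) \<Gamma>))"
  unfolding separating_interval_family_def[symmetric]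
proof (intro conjI impI)
  assume "\<exists>\<Gamma> :: 'g set. atd_wrt (euclidean :: 'a topology) \<Gamma>"
  then obtain \<Gamma> :: "'g set" and g :: "'g \<Rightarrow> 'a \<Rightarrow> real" where "sigma01_separating euclidean \<Gamma> g"
    using atd_wrt_imp_sigma01_separating by blast
  then show "\<exists>P :: ('a \<times> 'a) set. separating_interval_family P"
    by (rule sigma01_separating_imp_separating_interval_family[OF assms])
next
  have "compact_space (euclidean :: 'a topology)"
    using assms by (simp add: compact_space_def)
  moreover assume "\<exists>P :: ('a \<times> 'a) set. separating_interval_family P"
  ultimately show "\<exists>\<Gamma> :: ('a \<times> 'a) set. atd_wrt (euclidean :: 'a topology) \<Gamma>"
    using separating_interval_family_imp_sigma01_separating[OF assms]
          compact_sigma01_separating_imp_atd_wrt by blast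
qed

end
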